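(* Let $p$ be a prime, $n\ge1$, $d\ge2$, ${\bf a}_1,\dots,{\bf a}_N\in\mathbb{N}^{n+1}$ with coordinate sums $d$, and $I\subseteq\{0,1,\dots,n\}$. If $u,v\in U^I_{\min}$, $\nu\in\mathbb{N}^N$, and $\sum_{j=1}^N\nu_j{\bf a}_j^+=pu-v$, then $\nu_j\le p-1$ for all $j$.
   Context: ${\bf a}_j^+=({\bf a}_j,1)\in\mathbb{N}^{n+2}$. The integer $\mu_I$ is defined by $\lceil|I|/d\rceil=\mu_I+1$. $U^I$ is the set of $u=(u_0,\dots,u_{n+1})\in\mathbb{N}^{n+2}$ with $\sum_{i=0}^nu_i=du_{n+1}$ and $u_i>0$ for all $i\in I$, and $U^I_{\min}=\{u\in U^I:u_{n+1}=\mu_I+1\}$. *)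

theory Defs
  imports Complex_Main "HOL-Computational_Algebra.Primes"
begin

text \<open>Vectors in N^(n+2) are represented as functions nat => nat with indices 0..n+1
  and value 0 outside this range. The exponent vectors a_j in N^(n+1) are a j (indices 0..n).\<close>

definition aplus :: "nat \<Rightarrow> (nat \<Rightarrow> nat \<Rightarrow> nat) \<Rightarrow> nat \<Rightarrow> nat \<Rightarrow> nat" where
  "aplus n a j i = (if i \<le> n then a j i else if i = n + 1 then 1 else 0)"

definition mu :: "nat \<Rightarrow> nat set \<Rightarrow> int" where
  "mu d I = \<lceil>real (card I) / real d\<rceil> - 1"

definition U :: "nat \<Rightarrow> nat \<Rightarrow> nat set \<Rightarrow> (nat \<Rightarrow> nat) set" where
  "U n d I = {u. (\<forall>i > n + 1. u i = 0) \<and> (\<Sum>i=0..n. u i) = d * u (n + 1)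
                  \<and> (\<forall>i\<in>I. u i > 0)}"

definition U_min :: "nat \<Rightarrow> nat \<Rightarrow> nat set \<Rightarrow> (nat \<Rightarrow> nat) set" where
  "U_min n d I = {u \<in> U n d I. int (u (n + 1)) = mu d I + 1}"

end

theory Submission
  imports Defs
begin

text \<open>If some \<open>\<nu>\<^sub>k \<ge> p\<close>, then \<open>p a\<^sub>k\<^sup>+ \<le> p u - v\<close> coordinatewise, so \<open>a\<^sub>k\<^sup>+ \<le> u\<close> with strict
  inequality wherever \<open>v\<close> is positive, in particular on \<open>I\<close>. Hence \<open>u - a\<^sub>k\<^sup>+\<close> lies in \<open>U\<^sup>I\<close>
  with last coordinate \<open>\<mu>\<^sub>I\<close>; but every element of \<open>U\<^sup>I\<close> has last coordinate at least
  \<open>\<mu>\<^sub>I + 1\<close>, since \<open>|I| \<le> \<Sum>\<^sub>i u\<^sub>i = d u\<^sub>n\<^sub>+\<^sub>1\<close>.\<close>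

lemma mu_plus_one_le:
  assumes "d > 0" and "card I \<le> d * m"
  shows "mu d I + 1 \<le> int m"
proof -
  have "real (card I) / real d \<le> real m"
    using assms by (simp add: divide_le_eq mult.commute flip: of_nat_mult)
  then show ?thesis
    unfolding mu_def by (simp add: ceiling_le_iff)
qed

lemma U_last_coordinate_ge_mu:
  assumes "w \<in> U n d I" and "I \<subseteq> {0..n}" and "d > 0"
  shows "mu d I + 1 \<le> int (w (n + 1))"
proof (rule mu_plus_one_le[OF \<open>d > 0\<close>])
  have "card I = (\<Sum>i\<in>I. 1::nat)" by simp
  also have "\<dots> \<le> (\<Sum>i\<in>I. w i)"
    using assms(1) by (intro sum_mono) (auto simp: U_def Suc_le_eq)
  also have "\<dots> \<le> (\<Sum>i=0..n. w i)"
    using assms(2) by (intro sum_mono2) auto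
  also have "\<dots> = d * w (n + 1)"
    using assms(1) by (simp add: U_def)
  finally show "card I \<le> d * w (n + 1)" .
qed

lemma U_diff:
  assumes "u \<in> U n d I"
    and le: "\<And>i. i \<le> n + 1 \<Longrightarrow> b i \<le> u i"
    and less: "\<And>i. i \<in> I \<Longrightarrow> b i < u i"
    and b_sum: "(\<Sum>i=0..n. b i) = d * b (n + 1)"
  shows "(\<lambda>i. u i - b i) \<in> U n d I"
proof -
  have "(\<Sum>i=0..n. u i - b i) = (\<Sum>i=0..n. u i) - (\<Sum>i=0..n. b i)"
    using le by (intro sum_subtractf_nat) auto
  also have "\<dots> = d * (u (n + 1) - b (n + 1))"
    using assms(1) b_sum by (simp add: U_def diff_mult_distrib2)
  finally show ?thesis
    using assms(1) less by (auto simp: U_def)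
qed

lemma scaled_le_diff_imp_le:
  fixes p x y z :: nat
  assumes "p > 0" and "int p * x \<le> int p * y - z"
  shows "x \<le> y" and "z > 0 \<Longrightarrow> x < y"
proof -
  have "int p * x \<le> int p * y" using assms(2) by linarith
  then show "x \<le> y" using assms(1) by (simp add: mult_le_cancel_left)
  assume "z > 0"
  then have "int p * x < int p * y" using assms(2) by linarith
  then show "x < y" using assms(1) by (simp add: mult_less_cancel_left)
qed

theorem lemma2p1:
  fixes p n d N :: nat and a :: "nat \<Rightarrow> nat \<Rightarrow> nat" and I :: "nat set"
    and u v nu :: "nat \<Rightarrow> nat"
  assumes "prime p" and "n \<ge> 1" and "d \<ge> 2"
    and "\<forall>j\<in>{1..N}. (\<Sum>i=0..n. a j i) = d"
    and "I \<subseteq> {0..n}"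
    and "u \<in> U_min n d I" and "v \<in> U_min n d I"
    and "\<forall>i\<le>n + 1. int (\<Sum>j=1..N. nu j * aplus n a j i) = int p * int (u i) - int (v i)"
  shows "\<forall>j\<in>{1..N}. nu j \<le> p - 1"
proof (rule ccontr)
  assume "\<not> ?thesis"
  then obtain k where k: "k \<in> {1..N}" and "p \<le> nu k" by force
  have p: "p > 0" using \<open>prime p\<close> prime_gt_0_nat by blast
  have scaled: "int p * aplus n a k i \<le> int p * u i - v i" if "i \<le> n + 1" for i
  proof -
    have "p * aplus n a k i \<le> nu k * aplus n a k i" using \<open>p \<le> nu k\<close> by simp
    also have "\<dots> \<le> (\<Sum>j=1..N. nu j * aplus n a j i)" using k by (intro member_le_sum) auto
    finally have "int (p * aplus n a k i) \<le> int (\<Sum>j=1..N. nu j * aplus n a j i)"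
      by (simp only: of_nat_le_iff)
    with assms(8) that show ?thesis by simp
  qed
  have le: "aplus n a k i \<le> u i" if "i \<le> n + 1" for i
    using scaled_le_diff_imp_le(1)[OF p scaled[OF that]] .
  have less: "aplus n a k i < u i" if "i \<in> I" for i
  proof (rule scaled_le_diff_imp_le(2)[OF p scaled])
    show "i \<le> n + 1" using that \<open>I \<subseteq> {0..n}\<close> by auto
    show "v i > 0" using \<open>v \<in> U_min n d I\<close> that by (auto simp: U_min_def U_def)
  qed
  have u: "u \<in> U n d I" "int (u (n + 1)) = mu d I + 1"
    using \<open>u \<in> U_min n d I\<close> by (auto simp: U_min_def)
  have "(\<Sum>i=0..n. aplus n a k i) = d * aplus n a k (n + 1)"
    using assms(4) k by (simp add: aplus_def)
  then have "(\<lambda>i. u i - aplus n a k i) \<in> U n d I"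
    using U_diff[OF u(1)] le less by blast
  from U_last_coordinate_ge_mu[OF this \<open>I \<subseteq> {0..n}\<close>] \<open>d \<ge> 2\<close>
  have "mu d I + 1 \<le> int (u (n + 1) - 1)" by (simp add: aplus_def)
  moreover have "u (n + 1) \<ge> 1" using le[of "n + 1"] by (simp add: aplus_def)
  ultimately show False using u(2) by simp
qed

end
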